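(* Let $K \ge 2$, $k \in \{1,\dots,K-1\}$, $\mathbf{x}_0 = \mathbf{e}_k \in \{0,1\}^K$, and let $\mathbf{e}_K$ be the $K$-th standard basis vector. Let $\boldsymbol{\epsilon} \sim \mathcal{N}(\mathbf{0},\mathbf{I}_K)$, $Y = \max_{j\neq k}\epsilon_j - \epsilon_k$, and $F_Y$ the cumulative distribution function of $Y$. Let $(\gamma_t)_{t\in[0,1]}$ be a schedule with $\gamma_t \in (0,1)$, and let $(\tilde{\alpha}_t,\tilde{\sigma}_t)_{t\in[0,1]}$ be real coefficients with $\tilde{\sigma}_t>0$, $\tilde{\alpha}_t^2+\tilde{\sigma}_t^2=1$, and $F_Y(\tilde{\alpha}_t/\tilde{\sigma}_t) = \gamma_t$ for all $t$. Define $\mathbf{w}_t = \tilde{\alpha}_t\mathbf{x}_0 + \tilde{\sigma}_t\boldsymbol{\epsilon}$ and $\mathbf{z}_t = \mathbf{x}_0$ if $\mathbf{w}_t^{(k)} > \max_{j\neq k}\mathbf{w}_t^{(j)}$, $\mathbf{z}_t = \mathbf{e}_K$ otherwise. Let $u = F_Y(Y)$. Then $u$ is uniformly distributed on $[0,1]$, and for every $t\in[0,1]$, $$\mathbf{z}_t = \begin{cases}\mathbf{x}_0 & \text{if } \gamma_t > u,\\ \mathbf{e}_K & \text{otherwise.}\end{cases}$$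
   Context: This is the masked-diffusion setting in which each token's discrete state is the projection of a variance-preserving Gaussian latent along a deterministic path with a single fixed noise vector $\boldsymbol{\epsilon}$; $\gamma_t$ is the probability that the token is unmasked at time $t$. *)

theory Defs
  imports "HOL-Probability.Probability"
begin

text \<open>Vectors in R^K are represented as functions nat => real, indexed by {1..K}.
  basis_vec j is the j-th standard basis vector.\<close>
definition basis_vec :: "nat \<Rightarrow> nat \<Rightarrow> real" where
  "basis_vec j = (\<lambda>i. if i = j then 1 else 0)"

end

theory Submission
  imports Defs
begin

text \<open>The token is unmasked exactly when \<open>\<alpha>\<^sub>t + \<sigma>\<^sub>t \<epsilon>\<^sub>k > \<sigma>\<^sub>t max\<^sub>j\<^sub>\<noteq>\<^sub>k \<epsilon>\<^sub>j\<close>, i.e. when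
  \<open>Y < \<alpha>\<^sub>t/\<sigma>\<^sub>t\<close>. The law of \<open>Y\<close> has no atoms (each \<open>\<epsilon>\<^sub>j - \<epsilon>\<^sub>k\<close> is Gaussian) and charges every
  interval (by independence, every box of the \<open>\<epsilon>\<^sub>j\<close> has positive probability), so its cdf
  \<open>F\<^sub>Y\<close> is continuous and strictly increasing. Continuity makes \<open>u = F\<^sub>Y(Y)\<close> uniform
  (probability integral transform), and strict monotonicity turns \<open>Y < \<alpha>\<^sub>t/\<sigma>\<^sub>t\<close> into
  \<open>u < F\<^sub>Y(\<alpha>\<^sub>t/\<sigma>\<^sub>t) = \<gamma>\<^sub>t\<close>.\<close>

lemma (in prob_space) indep_vars_indep_var:
  assumes indep: "indep_vars (\<lambda>_. N) X I" and "i \<in> I" "j \<in> I" "i \<noteq> j"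
  shows "indep_var N (X i) N (X j)"
proof -
  have "indep_var
      N ((\<lambda>f. f i) \<circ> (\<lambda>\<omega>. restrict (\<lambda>l. X l \<omega>) {i}))
      N ((\<lambda>f. f j) \<circ> (\<lambda>\<omega>. restrict (\<lambda>l. X l \<omega>) {j}))"
    using assms by (intro indep_var_compose[OF indep_var_restrict[OF indep]]) auto
  then show ?thesis
    by (simp add: comp_def)
qed

lemma (in prob_space) prob_eq_0_if_distributed:
  fixes Z :: "'a \<Rightarrow> real"
  assumes "distributed M lborel Z f"
  shows "prob {\<omega> \<in> space M. Z \<omega> = y} = 0"
proof -
  have "emeasure M (Z -` {y} \<inter> space M) = (\<integral>\<^sup>+x. f x * indicator {y} x \<partial>lborel)"
    using distributed_emeasure[OF assms] by simp
  also have "\<dots> = 0"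
    by (rule nn_integral_null_set) auto
  finally show ?thesis
    by (simp add: measure_def Int_def conj_commute vimage_def)
qed

lemma (in prob_space) prob_std_normal_interval_pos:
  fixes Z :: "'a \<Rightarrow> real"
  assumes "distributed M lborel Z std_normal_density" "a < b"
  shows "prob (Z -` {a<..<b} \<inter> space M) > 0"
proof -
  have "emeasure M (Z -` {a<..<b} \<inter> space M) =
      (\<integral>\<^sup>+x. ennreal (std_normal_density x) * indicator {a<..<b} x \<partial>lborel)"
    using distributed_emeasure[OF assms(1)] by simp
  also have "\<dots> \<noteq> 0"
  proof
    assume "(\<integral>\<^sup>+x. ennreal (std_normal_density x) * indicator {a<..<b} x \<partial>lborel) = 0"
    then have "AE x in lborel. x \<notin> {a<..<b}"
      by (subst (asm) nn_integral_0_iff_AE)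
        (auto elim!: eventually_mono simp: std_normal_density_def split: split_indicator)
    then have "emeasure lborel {a<..<b} = 0"
      by (subst (asm) AE_iff_measurable[of "{a<..<b}"]) auto
    with \<open>a < b\<close> show False by simp
  qed
  finally show ?thesis
    by (simp add: emeasure_eq_measure zero_less_measure_iff)
qed

lemma (in prob_space) prob_Max_eq_0:
  fixes X :: "'i \<Rightarrow> 'a \<Rightarrow> real"
  assumes "finite S" "S \<noteq> {}" and meas: "\<And>j. j \<in> S \<Longrightarrow> random_variable borel (X j)"
    and atomless: "\<And>j. j \<in> S \<Longrightarrow> prob {\<omega> \<in> space M. X j \<omega> = y} = 0"
  shows "prob {\<omega> \<in> space M. Max ((\<lambda>j. X j \<omega>) ` S) = y} = 0"
proof -
  have "{\<omega> \<in> space M. Max ((\<lambda>j. X j \<omega>) ` S) = y} \<subseteq> (\<Union>j\<in>S. {\<omega> \<in> space M. X j \<omega> = y})"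
  proof
    fix \<omega> assume "\<omega> \<in> {\<omega> \<in> space M. Max ((\<lambda>j. X j \<omega>) ` S) = y}"
    moreover have "Max ((\<lambda>j. X j \<omega>) ` S) \<in> (\<lambda>j. X j \<omega>) ` S"
      using assms(1,2) by (intro Max_in) auto
    ultimately show "\<omega> \<in> (\<Union>j\<in>S. {\<omega> \<in> space M. X j \<omega> = y})"
      by auto
  qed
  then have "prob {\<omega> \<in> space M. Max ((\<lambda>j. X j \<omega>) ` S) = y}
      \<le> prob (\<Union>j\<in>S. {\<omega> \<in> space M. X j \<omega> = y})"
    using assms(1) meas by (intro finite_measure_mono) auto
  also have "\<dots> \<le> (\<Sum>j\<in>S. prob {\<omega> \<in> space M. X j \<omega> = y})"
    using assms(1) meas by (intro finite_measure_subadditive_finite) auto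
  finally show ?thesis
    using atomless by (simp add: order.antisym[OF _ measure_nonneg])
qed

lemma (in real_distribution) strict_mono_cdfI:
  assumes "\<And>a b. a < b \<Longrightarrow> measure M {a<..b} > 0"
  shows "strict_mono (cdf M)"
  by (rule strict_monoI) (use assms cdf_diff_eq in fastforce)

lemma (in real_distribution) continuous_cdf_level:
  assumes cont: "\<And>y. isCont (cdf M) y" and x: "0 < x" "x < 1"
  obtains s where "cdf M s = x" and "\<And>y. cdf M y \<le> x \<longleftrightarrow> y \<le> s"
proof -
  define L where "L = {y. cdf M y \<le> x}"
  obtain a where "cdf M a < x"
    using order_tendstoD(2)[OF cdf_lim_at_bot x(1)] by (auto simp: eventually_at_bot_linorder)
  then have "L \<noteq> {}"
    by (auto simp: L_def intro: less_imp_le)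
  obtain b where b: "\<And>y. y \<ge> b \<Longrightarrow> cdf M y > x"
    using order_tendstoD(1)[OF cdf_lim_at_top_prob x(2)] by (auto simp: eventually_at_top_linorder)
  then have "bdd_above L"
    by (intro bdd_aboveI[of _ b]) (metis L_def mem_Collect_eq not_le less_imp_le)
  have "closed L"
    unfolding L_def using cont
    by (intro closed_Collect_le continuous_at_imp_continuous_on continuous_on_const) auto
  have L_iff: "cdf M y \<le> x \<longleftrightarrow> y \<le> Sup L" for y
  proof
    show "cdf M y \<le> x \<Longrightarrow> y \<le> Sup L"
      using \<open>bdd_above L\<close> by (auto simp: L_def intro: cSup_upper)
    show "y \<le> Sup L \<Longrightarrow> cdf M y \<le> x"
      using closed_contains_Sup[OF \<open>L \<noteq> {}\<close> \<open>bdd_above L\<close> \<open>closed L\<close>]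
      by (auto simp: L_def intro: order_trans cdf_nondecreasing)
  qed
  have "x \<le> cdf M (Sup L)"
  proof (rule tendsto_lowerbound)
    show "(cdf M \<longlongrightarrow> cdf M (Sup L)) (at_right (Sup L))"
      using cdf_is_right_cont by (simp add: continuous_within)
    show "\<forall>\<^sub>F y in at_right (Sup L). x \<le> cdf M y"
      using eventually_at_right_less by (rule eventually_mono) (metis L_iff not_le less_imp_le)
  qed simp
  moreover have "cdf M (Sup L) \<le> x"
    using L_iff by simp
  ultimately show ?thesis
    using L_iff by (intro that[of "Sup L"]) auto
qed

lemma (in real_distribution) cdf_eq_clamp_if_cdf_eq_on_unit_interval:
  assumes "\<And>x. 0 < x \<Longrightarrow> x < 1 \<Longrightarrow> cdf M x = x"
  shows "cdf M x = max 0 (min 1 x)"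
proof (cases "x \<le> 0 \<or> 1 \<le> x")
  case True
  then show ?thesis
  proof
    assume "x \<le> 0"
    have "cdf M x \<le> 0"
    proof (rule dense_ge_bounded[of 0 1])
      show "cdf M x \<le> w" if "0 < w" "w < 1" for w
        using that assms[of w] cdf_nondecreasing[of x w] \<open>x \<le> 0\<close> by simp
    qed simp
    then show ?thesis
      using \<open>x \<le> 0\<close> cdf_nonneg[of x] by simp
  next
    assume "1 \<le> x"
    have "1 \<le> cdf M x"
    proof (rule dense_le_bounded[of 0 1])
      show "w \<le> cdf M x" if "0 < w" "w < 1" for w
        using that assms[of w] cdf_nondecreasing[of w x] \<open>1 \<le> x\<close> by simp
    qed simp
    then show ?thesis
      using \<open>1 \<le> x\<close> cdf_bounded_prob[of x] by simp
  qed
qed (use assms in auto)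

lemma cdf_uniform_01: "0 < x \<Longrightarrow> x < 1 \<Longrightarrow> cdf (uniform_measure lborel {0..1}) x = x"
  unfolding cdf_def by (subst measure_uniform_measure) (auto simp: Int_atLeastAtMost)

lemma real_distribution_eq_uniform_01I:
  assumes "real_distribution D" and "\<And>x. 0 < x \<Longrightarrow> x < 1 \<Longrightarrow> cdf D x = x"
  shows "D = uniform_measure lborel {0..1}"
proof -
  have U: "real_distribution (uniform_measure lborel {0..1::real})"
    by (auto simp: real_distribution_def real_distribution_axioms_def
        intro!: prob_space_uniform_measure)
  show ?thesis
    using real_distribution.cdf_eq_clamp_if_cdf_eq_on_unit_interval[OF U cdf_uniform_01]
      real_distribution.cdf_eq_clamp_if_cdf_eq_on_unit_interval[OF assms]
    by (intro cdf_unique[OF assms(1) U]) auto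
qed

lemma (in prob_space) cdf_distr_eq_prob:
  assumes "random_variable borel X"
  shows "cdf (distr M borel X) y = prob {\<omega> \<in> space M. X \<omega> \<le> y}"
  unfolding cdf_def using assms
  by (subst measure_distr) (auto simp: vimage_def Int_def conj_commute)

lemma (in prob_space) isCont_cdf_distrI:
  assumes X: "random_variable borel X" and "prob {\<omega> \<in> space M. X \<omega> = y} = 0"
  shows "isCont (cdf (distr M borel X)) y"
proof -
  interpret D: real_distribution "distr M borel X"
    using X by simp
  show ?thesis
    unfolding D.isCont_cdf using X assms(2)
    by (subst measure_distr) (auto simp: vimage_def Int_def conj_commute)
qed

lemma (in prob_space) strict_mono_cdf_distrI:
  assumes X: "random_variable borel X"
    and pos: "\<And>a b. a < b \<Longrightarrow> prob {\<omega> \<in> space M. a < X \<omega> \<and> X \<omega> \<le> b} > 0"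
  shows "strict_mono (cdf (distr M borel X))"
proof -
  interpret D: real_distribution "distr M borel X"
    using X by simp
  show ?thesis
    using X pos by (intro D.strict_mono_cdfI) (subst measure_distr; auto simp: vimage_def Int_def conj_commute)
qed

lemma (in prob_space) distr_cdf_uniform:
  assumes X: "random_variable borel X" and cont: "\<And>y. isCont (cdf (distr M borel X)) y"
  shows "distr M lborel (\<lambda>\<omega>. cdf (distr M borel X) (X \<omega>)) = uniform_measure lborel {0..1}"
proof -
  interpret D: real_distribution "distr M borel X"
    using X by simp
  let ?F = "cdf (distr M borel X)"
  have FX: "random_variable borel (\<lambda>\<omega>. ?F (X \<omega>))"
    using borel_measurable_mono[OF mono_onI[OF D.cdf_nondecreasing]] X by measurable
  have "distr M lborel (\<lambda>\<omega>. ?F (X \<omega>)) = distr M borel (\<lambda>\<omega>. ?F (X \<omega>))"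
    by (intro distr_cong) simp_all
  also have "\<dots> = uniform_measure lborel {0..1}"
  proof (rule real_distribution_eq_uniform_01I)
    show "real_distribution (distr M borel (\<lambda>\<omega>. ?F (X \<omega>)))"
      using FX by simp
    fix x :: real assume "0 < x" "x < 1"
    then obtain s where s: "?F s = x" "\<And>y. ?F y \<le> x \<longleftrightarrow> y \<le> s"
      using D.continuous_cdf_level cont by blast
    have "cdf (distr M borel (\<lambda>\<omega>. ?F (X \<omega>))) x = prob {\<omega> \<in> space M. ?F (X \<omega>) \<le> x}"
      using cdf_distr_eq_prob[OF FX] .
    also have "\<dots> = prob {\<omega> \<in> space M. X \<omega> \<le> s}"
      using s(2) by simp
    also have "\<dots> = x"
      using cdf_distr_eq_prob[OF X] s(1) by simp
    finally show "cdf (distr M borel (\<lambda>\<omega>. ?F (X \<omega>))) x = x" .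
  qed
  finally show ?thesis .
qed

lemma basis_coordinate_beats_Max_iff:
  fixes x :: "nat \<Rightarrow> real"
  assumes "finite S" "S \<noteq> {}" "k \<notin> S" "\<sigma> > 0"
  shows "Max ((\<lambda>j. \<alpha> * basis_vec k j + \<sigma> * x j) ` S) < \<alpha> * basis_vec k k + \<sigma> * x k
    \<longleftrightarrow> Max (x ` S) - x k < \<alpha> / \<sigma>"
proof -
  have "Max ((\<lambda>j. \<alpha> * basis_vec k j + \<sigma> * x j) ` S) = Max ((\<lambda>y. \<sigma> * y) ` x ` S)"
    using \<open>k \<notin> S\<close> by (auto simp: basis_vec_def image_image intro!: arg_cong[where f = Max] image_cong)
  also have "\<dots> = \<sigma> * Max (x ` S)"
    using assms by (intro mono_Max_commute[symmetric]) (auto simp: mono_def)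
  finally have "Max ((\<lambda>j. \<alpha> * basis_vec k j + \<sigma> * x j) ` S) < \<alpha> * basis_vec k k + \<sigma> * x k
      \<longleftrightarrow> (Max (x ` S) - x k) * \<sigma> < \<alpha>"
    by (simp add: basis_vec_def algebra_simps)
  also have "\<dots> \<longleftrightarrow> Max (x ` S) - x k < \<alpha> / \<sigma>"
    using \<open>\<sigma> > 0\<close> by (rule pos_less_divide_eq[symmetric])
  finally show ?thesis .
qed

locale indep_std_normals = prob_space +
  fixes X :: "'i \<Rightarrow> 'a \<Rightarrow> real" and I :: "'i set"
  assumes distributed_std_normal: "i \<in> I \<Longrightarrow> distributed M lborel (X i) std_normal_density"
    and indep: "indep_vars (\<lambda>_. borel) X I"
begin

lemma random_variable_X: "i \<in> I \<Longrightarrow> random_variable borel (X i)"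
  using distributed_std_normal distributed_measurable by fastforce

lemma random_variable_Max_gap:
  assumes "finite I" "k \<in> I"
  shows "random_variable borel (\<lambda>\<omega>. Max ((\<lambda>j. X j \<omega>) ` (I - {k})) - X k \<omega>)"
  using assms random_variable_X by (intro borel_measurable_diff borel_measurable_Max) auto

lemma prob_diff_eq_0:
  assumes "i \<in> I" "j \<in> I" "i \<noteq> j"
  shows "prob {\<omega> \<in> space M. X i \<omega> - X j \<omega> = y} = 0"
proof -
  have "distributed M lborel (\<lambda>\<omega>. X i \<omega> - X j \<omega>) (normal_density (0 - 0) (sqrt (1\<^sup>2 + 1\<^sup>2)))"
    using assms
    by (intro diff_indep_normal indep_vars_indep_var[OF indep] distributed_std_normal) auto
  then show ?thesis
    by (rule prob_eq_0_if_distributed)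
qed

lemma prob_Max_gap_eq_0:
  assumes "finite I" "k \<in> I" "I - {k} \<noteq> {}"
  shows "prob {\<omega> \<in> space M. Max ((\<lambda>j. X j \<omega>) ` (I - {k})) - X k \<omega> = y} = 0"
proof -
  have "Max ((\<lambda>j. X j \<omega>) ` (I - {k})) - X k \<omega> = Max ((\<lambda>j. X j \<omega> - X k \<omega>) ` (I - {k}))" for \<omega>
    using assms by (subst mono_Max_commute[of "\<lambda>y. y - X k \<omega>"]) (auto simp: mono_def image_image)
  moreover have "prob {\<omega> \<in> space M. Max ((\<lambda>j. X j \<omega> - X k \<omega>) ` (I - {k})) = y} = 0"
    using assms random_variable_X prob_diff_eq_0 by (intro prob_Max_eq_0) auto
  ultimately show ?thesis
    by simp
qed

lemma prob_Max_gap_interval_pos: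
  assumes "finite I" "k \<in> I" "I - {k} \<noteq> {}" "a < b"
  shows "0 < prob {\<omega> \<in> space M. a < Max ((\<lambda>j. X j \<omega>) ` (I - {k})) - X k \<omega>
                                  \<and> Max ((\<lambda>j. X j \<omega>) ` (I - {k})) - X k \<omega> \<le> b}"
    (is "0 < prob ?E")
proof -
  define d where "d = (b - a) / 4"
  define c where "c = (a + b) / 2"
  define A where "A i = (if i = k then {0<..<d} else {c<..<c + d})" for i
  \<comment> \<open>on this box the gap lies in \<open>(c - d, c + d) \<subseteq> (a, b]\<close>\<close>
  have "0 < (\<Prod>i\<in>I. prob (X i -` A i \<inter> space M))"
    using assms
    by (intro prod_pos) (auto simp: A_def d_def intro!: prob_std_normal_interval_pos distributed_std_normal)
  also have "\<dots> = prob (\<Inter>i\<in>I. X i -` A i \<inter> space M)"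
    using assms by (intro indep_varsD[OF indep, symmetric]) (auto simp: A_def)
  also have "\<dots> \<le> prob ?E"
  proof (rule finite_measure_mono)
    show "(\<Inter>i\<in>I. X i -` A i \<inter> space M) \<subseteq> ?E"
    proof
      fix \<omega> assume \<omega>: "\<omega> \<in> (\<Inter>i\<in>I. X i -` A i \<inter> space M)"
      then have A: "X i \<omega> \<in> A i" if "i \<in> I" for i
        using that by blast
      have "\<omega> \<in> space M"
        using \<omega> assms(2) by blast
      have "Max ((\<lambda>j. X j \<omega>) ` (I - {k})) \<in> (\<lambda>j. X j \<omega>) ` (I - {k})"
        using assms by (intro Max_in) auto
      then obtain j where "j \<in> I" "j \<noteq> k" "Max ((\<lambda>j. X j \<omega>) ` (I - {k})) = X j \<omega>"
        by auto
      then have "c < Max ((\<lambda>j. X j \<omega>) ` (I - {k})) \<and> Max ((\<lambda>j. X j \<omega>) ` (I - {k})) < c + d"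
        using A[of j] by (simp add: A_def)
      moreover have "0 < X k \<omega> \<and> X k \<omega> < d"
        using A[OF assms(2)] by (simp add: A_def)
      ultimately show "\<omega> \<in> ?E"
        using \<open>\<omega> \<in> space M\<close> by (auto simp: c_def d_def field_simps)
    qed
    show "?E \<in> events"
      using random_variable_Max_gap[OF assms(1,2)] by measurable
  qed
  finally show ?thesis .
qed

end

theorem theorem3p3:
  fixes M :: "'a measure"
    and K k :: nat
    and \<epsilon> :: "'a \<Rightarrow> nat \<Rightarrow> real"
    and \<gamma> \<alpha> \<sigma> :: "real \<Rightarrow> real"
    and Y U :: "'a \<Rightarrow> real"
    and w :: "real \<Rightarrow> 'a \<Rightarrow> nat \<Rightarrow> real"
    and z :: "real \<Rightarrow> 'a \<Rightarrow> nat \<Rightarrow> real"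
  assumes "prob_space M"
    and "K \<ge> 2" and "k \<in> {1..K-1}"
    and "\<And>j. j \<in> {1..K} \<Longrightarrow> distributed M lborel (\<lambda>\<omega>. \<epsilon> \<omega> j) std_normal_density"
    and "prob_space.indep_vars M (\<lambda>_. borel) (\<lambda>j \<omega>. \<epsilon> \<omega> j) {1..K}"
    and "Y = (\<lambda>\<omega>. Max ((\<lambda>j. \<epsilon> \<omega> j) ` ({1..K} - {k})) - \<epsilon> \<omega> k)"
    and "\<And>t. t \<in> {0..1} \<Longrightarrow> 0 < \<gamma> t \<and> \<gamma> t < 1"
    and "\<And>t. t \<in> {0..1} \<Longrightarrow> \<sigma> t > 0"
    and "\<And>t. t \<in> {0..1} \<Longrightarrow> (\<alpha> t)\<^sup>2 + (\<sigma> t)\<^sup>2 = 1"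
    and "\<And>t. t \<in> {0..1} \<Longrightarrow> cdf (distr M borel Y) (\<alpha> t / \<sigma> t) = \<gamma> t"
    and "w = (\<lambda>t \<omega> i. \<alpha> t * basis_vec k i + \<sigma> t * \<epsilon> \<omega> i)"
    and "z = (\<lambda>t \<omega>. if w t \<omega> k > Max ((\<lambda>j. w t \<omega> j) ` ({1..K} - {k}))
                      then basis_vec k else basis_vec K)"
    and "U = (\<lambda>\<omega>. cdf (distr M borel Y) (Y \<omega>))"
  shows "distr M lborel U = uniform_measure lborel {0..1}
    \<and> (\<forall>t \<in> {0..1}. \<forall>\<omega> \<in> space M.
          z t \<omega> = (if \<gamma> t > U \<omega> then basis_vec k else basis_vec K))"
proof -
  interpret indep_std_normals M "\<lambda>j \<omega>. \<epsilon> \<omega> j" "{1..K}"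
    using assms(1,4,5) by (simp add: indep_std_normals_def indep_std_normals_axioms_def)
  have I: "finite {1..K}" "k \<in> {1..K}" "{1..K} - {k} \<noteq> {}"
    using assms(2,3) by (auto dest: subsetD[of _ _ K])
  have Y: "random_variable borel Y"
    unfolding assms(6) using random_variable_Max_gap[OF I(1,2)] .
  have F_cont: "isCont (cdf (distr M borel Y)) y" for y
    using Y prob_Max_gap_eq_0[OF I] unfolding assms(6) by (rule isCont_cdf_distrI)
  have F_mono: "strict_mono (cdf (distr M borel Y))"
    using Y prob_Max_gap_interval_pos[OF I] unfolding assms(6) by (rule strict_mono_cdf_distrI)
  have "z t \<omega> = (if \<gamma> t > U \<omega> then basis_vec k else basis_vec K)" if t: "t \<in> {0..1}" for t \<omega>
  proof -
    have "w t \<omega> k > Max ((\<lambda>j. w t \<omega> j) ` ({1..K} - {k})) \<longleftrightarrow> Y \<omega> < \<alpha> t / \<sigma> t"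
      unfolding assms(6,11) using I assms(8)[OF t] by (intro basis_coordinate_beats_Max_iff) auto
    moreover have "\<gamma> t > U \<omega> \<longleftrightarrow> Y \<omega> < \<alpha> t / \<sigma> t"
      using assms(10)[OF t] strict_mono_less[OF F_mono] unfolding assms(13) by metis
    ultimately show ?thesis
      unfolding assms(12) by simp
  qed
  with distr_cdf_uniform[OF Y F_cont] show ?thesis
    unfolding assms(13) by blast
qed

end
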